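(* Let $p,p'\ge1$ with $|p-p'|=1$ and let $X=\alpha_{(p,p')}(Y)$ where $Y=y_1y_2\cdots$ is a Sturmian word in which $bb$ does not occur. An occurrence of the letter $b$ in $X$ (as a palindrome center) is original if and only if it is the first letter $b$ of $\alpha(y_jy_{j+1})$ (i.e. the last letter of $\alpha(y_j)$) for some $j$ with $y_j\neq y_{j+1}$.
   Context: $\alpha_{(p,p')}$ is the morphism $a\mapsto a^pb$, $b\mapsto a^{p'}b$. A Sturmian word is a right-infinite aperiodic word over $\{a,b\}$ with exactly $n+1$ factors of each length $n$. A center occurrence in a word is an occurrence of one of the factors $a$, $b$, $aa$. Write $X=\alpha(y_1)\alpha(y_2)\cdots$, with $\alpha(y_j)$ occupying positions $s_j+1,\dots,s_j+|\alpha(y_j)|$, $s_j=\sum_{t<j}|\alpha(y_t)|$. Reflections: the reflection of an occurrence $y_j=a$ (resp. $b$) is the center (middle letter if odd length, middle two letters if even length) of the run $a^p$ (resp. $a^{p'}$) at positions $s_j+1,\dots,s_j+p$ (resp. $s_j+p'$); the reflection of an occurrence $y_jy_{j+1}=aa$ is the letter $b$ at position $s_j+p+1$. A center occurrence of $X$ is original if it is not the reflection of any center occurrence of $Y$. *)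

theory Defs
  imports Main
begin

datatype letter = A | B

(* infinite words are functions nat => letter, indexed from 0
   (index i corresponds to position i+1 of the paper) *)

definition factors :: "(nat \<Rightarrow> letter) \<Rightarrow> nat \<Rightarrow> letter list set" where
  "factors w n = {map w [i..<i+n] | i. True}"

definition ult_periodic :: "(nat \<Rightarrow> 'a) \<Rightarrow> bool" where
  "ult_periodic w \<longleftrightarrow> (\<exists>P>0. \<exists>N. \<forall>i\<ge>N. w (i + P) = w i)"

definition sturmian :: "(nat \<Rightarrow> letter) \<Rightarrow> bool" where
  "sturmian w \<longleftrightarrow> \<not> ult_periodic w \<and> (\<forall>n. card (factors w n) = n + 1)"

fun alpha :: "nat \<Rightarrow> nat \<Rightarrow> letter \<Rightarrow> letter list" where
  "alpha p p' A = replicate p A @ [B]"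
| "alpha p p' B = replicate p' A @ [B]"

(* s_j: alpha(y j) occupies indices spos f y j .. spos f y (Suc j) - 1 *)
definition spos :: "(letter \<Rightarrow> letter list) \<Rightarrow> (nat \<Rightarrow> letter) \<Rightarrow> nat \<Rightarrow> nat" where
  "spos f y j = (\<Sum>t<j. length (f (y t)))"

(* the infinite word f(y_0) f(y_1) ... (f assumed non-erasing) *)
definition morph_apply :: "(letter \<Rightarrow> letter list) \<Rightarrow> (nat \<Rightarrow> letter) \<Rightarrow> nat \<Rightarrow> letter" where
  "morph_apply f y i = (let j = (LEAST j. i < spos f y (Suc j)) in f (y j) ! (i - spos f y j))"

(* an occurrence is (start index, length); center occurrences are occurrences of a, b or aa *)
definition center_occ :: "(nat \<Rightarrow> letter) \<Rightarrow> nat \<times> nat \<Rightarrow> bool" where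
  "center_occ w c \<longleftrightarrow> (snd c = 1 \<or> (snd c = 2 \<and> w (fst c) = A \<and> w (Suc (fst c)) = A))"

definition run_center :: "nat \<Rightarrow> nat \<Rightarrow> nat \<times> nat" where
  "run_center s m = (if odd m then (s + m div 2, 1) else (s + m div 2 - 1, 2))"

(* d (occurrence in X = alpha(Y)) is the reflection of the center occurrence c of Y *)
definition is_reflection :: "nat \<Rightarrow> nat \<Rightarrow> (nat \<Rightarrow> letter) \<Rightarrow> nat \<times> nat \<Rightarrow> nat \<times> nat \<Rightarrow> bool" where
  "is_reflection p p' y c d \<longleftrightarrow> center_occ y c \<and>
     ((snd c = 1 \<and> d = run_center (spos (alpha p p') y (fst c)) (if y (fst c) = A then p else p'))
    \<or> (snd c = 2 \<and> d = (spos (alpha p p') y (fst c) + p, 1)))"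

definition original :: "nat \<Rightarrow> nat \<Rightarrow> (nat \<Rightarrow> letter) \<Rightarrow> nat \<times> nat \<Rightarrow> bool" where
  "original p p' y d \<longleftrightarrow> center_occ (morph_apply (alpha p p') y) d \<and>
     \<not> (\<exists>c. is_reflection p p' y c d)"

end

theory Submission
  imports Defs
begin

text \<open>Every letter b of X = \<alpha>(Y) ends a block \<alpha>(y_j). The reflection of a single letter
of Y is the middle letter of an odd run of a's, so the only center occurrences of Y reflecting
onto a b are factors y_j y_(j+1) = aa, and the reflection of such a factor is exactly the last
letter of \<alpha>(y_j). Hence that b is original iff y_j y_(j+1) \<noteq> aa, which in the absence of bb
means y_j \<noteq> y_(j+1).\<close>

lemma spos_0 [simp]: "spos f y 0 = 0"
  by (simp add: spos_def)

lemma spos_Suc: "spos f y (Suc j) = spos f y j + length (f (y j))"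
  by (simp add: spos_def)

lemma strict_mono_spos:
  assumes "[] \<notin> range f"
  shows "strict_mono (spos f y)"
proof (rule strict_mono_Suc_iff[THEN iffD2], intro allI)
  fix j
  have "f (y j) \<noteq> []"
    using assms by (metis rangeI)
  then show "spos f y j < spos f y (Suc j)"
    by (simp add: spos_Suc)
qed

lemma ex_block_containing:
  assumes "[] \<notin> range f"
  shows "\<exists>j. spos f y j \<le> i \<and> i < spos f y (Suc j)"
proof -
  have "Suc i \<le> spos f y (Suc i)"
    using strict_mono_imp_increasing[OF strict_mono_spos[OF assms]] .
  then have "\<exists>j. i < spos f y j"
    by (metis Suc_le_eq)
  then obtain k where k: "i < spos f y k" and least: "\<And>k'. k' < k \<Longrightarrow> \<not> i < spos f y k'"
    using exists_least_iff[of "\<lambda>k. i < spos f y k"] by blast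
  then obtain j where "k = Suc j"
    by (cases k) auto
  then show ?thesis
    using k least[of j] leI by auto
qed

lemma morph_apply_in_block:
  assumes "[] \<notin> range f" and "spos f y j \<le> i" and "i < spos f y (Suc j)"
  shows "morph_apply f y i = f (y j) ! (i - spos f y j)"
proof -
  have "(LEAST j. i < spos f y (Suc j)) = j"
  proof (rule Least_equality)
    fix k assume "i < spos f y (Suc k)"
    then have "spos f y j < spos f y (Suc k)"
      using assms(2) by linarith
    then show "j \<le> k"
      using strict_mono_less[OF strict_mono_spos[OF assms(1)]] by simp
  qed (fact assms(3))
  then show ?thesis
    by (simp add: morph_apply_def)
qed

lemma alpha_eq: "alpha p p' x = replicate (if x = A then p else p') A @ [B]"
  by (cases x) auto

lemma alpha_nonempty: "[] \<notin> range (alpha p p')"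
  by (auto simp: alpha_eq)

lemma spos_alpha_Suc: "spos (alpha p p') y (Suc j) = spos (alpha p p') y j + Suc (if y j = A then p else p')"
  by (simp add: spos_Suc alpha_eq)

lemma morph_apply_alpha_in_run:
  assumes "spos (alpha p p') y j \<le> i" and "i < spos (alpha p p') y j + (if y j = A then p else p')"
  shows "morph_apply (alpha p p') y i = A"
  using assms morph_apply_in_block[OF alpha_nonempty assms(1)]
  by (simp add: spos_alpha_Suc alpha_eq nth_append)

lemma morph_apply_alpha_eq_B_iff:
  "morph_apply (alpha p p') y i = B \<longleftrightarrow> (\<exists>j. Suc i = spos (alpha p p') y (Suc j))"
proof
  obtain j where j: "spos (alpha p p') y j \<le> i" "i < spos (alpha p p') y (Suc j)"
    using ex_block_containing[OF alpha_nonempty] by blast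
  assume "morph_apply (alpha p p') y i = B"
  then have "Suc i = spos (alpha p p') y (Suc j)"
    using j morph_apply_alpha_in_run[of p p' y j i] by (fastforce simp: spos_alpha_Suc)
  then show "\<exists>j. Suc i = spos (alpha p p') y (Suc j)" ..
next
  assume "\<exists>j. Suc i = spos (alpha p p') y (Suc j)"
  then obtain j where "Suc i = spos (alpha p p') y (Suc j)" ..
  then show "morph_apply (alpha p p') y i = B"
    using morph_apply_in_block[OF alpha_nonempty, where y = y and j = j and i = i]
    by (simp add: spos_alpha_Suc alpha_eq nth_append)
qed

lemma reflection_of_letter_is_A:
  assumes "is_reflection p p' y (k, 1) (i, 1)"
  shows "morph_apply (alpha p p') y i = A"
proof -
  let ?m = "if y k = A then p else p'"
  have "odd ?m" and "i = spos (alpha p p') y k + ?m div 2"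
    using assms by (auto simp: is_reflection_def run_center_def split: if_splits)
  moreover have "?m div 2 < ?m"
    using \<open>odd ?m\<close> by (simp add: odd_pos)
  ultimately show ?thesis
    using morph_apply_alpha_in_run[of p p' y k i] by simp
qed

lemma reflection_at_block_end_iff:
  assumes "Suc i = spos (alpha p p') y (Suc j)"
  shows "(\<exists>c. is_reflection p p' y c (i, 1)) \<longleftrightarrow> y j = A \<and> y (Suc j) = A"
proof
  assume "\<exists>c. is_reflection p p' y c (i, 1)"
  then obtain k l where c: "is_reflection p p' y (k, l) (i, 1)"
    by auto
  have "morph_apply (alpha p p') y i = B"
    using assms morph_apply_alpha_eq_B_iff by blast
  then have "l = 2" and yk: "y k = A" "y (Suc k) = A" and "i = spos (alpha p p') y k + p"
    using c reflection_of_letter_is_A[of p p' y k i]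
    by (auto simp: is_reflection_def center_occ_def)
  then have "spos (alpha p p') y (Suc k) = spos (alpha p p') y (Suc j)"
    using assms by (simp add: spos_alpha_Suc)
  then have "k = j"
    using strict_mono_eq[OF strict_mono_spos[OF alpha_nonempty]] by blast
  then show "y j = A \<and> y (Suc j) = A"
    using yk by simp
next
  assume "y j = A \<and> y (Suc j) = A"
  then have "is_reflection p p' y (j, 2) (i, 1)"
    using assms by (simp add: is_reflection_def center_occ_def spos_alpha_Suc)
  then show "\<exists>c. is_reflection p p' y c (i, 1)" ..
qed

theorem corollary1:
  fixes p p' :: nat and y :: "nat \<Rightarrow> letter" and i :: nat
  assumes "p \<ge> 1" and "p' \<ge> 1" and "p = p' + 1 \<or> p' = p + 1"
    and "sturmian y"
    and "\<not> (\<exists>j. y j = B \<and> y (Suc j) = B)"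
    and "morph_apply (alpha p p') y i = B"
  shows "original p p' y (i, 1) \<longleftrightarrow>
         (\<exists>j. Suc i = spos (alpha p p') y (Suc j) \<and> y j \<noteq> y (Suc j))"
proof -
  obtain j where j: "Suc i = spos (alpha p p') y (Suc j)"
    using assms(6) morph_apply_alpha_eq_B_iff by blast
  have unique: "k = j" if "Suc i = spos (alpha p p') y (Suc k)" for k
    using that j strict_mono_eq[OF strict_mono_spos[OF alpha_nonempty]] by (metis Suc_inject)
  have "original p p' y (i, 1) \<longleftrightarrow> \<not> (y j = A \<and> y (Suc j) = A)"
    using reflection_at_block_end_iff[OF j] by (simp add: original_def center_occ_def)
  also have "\<dots> \<longleftrightarrow> y j \<noteq> y (Suc j)"
    using assms(5) by (cases "y j"; cases "y (Suc j)") auto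
  also have "\<dots> \<longleftrightarrow> (\<exists>j. Suc i = spos (alpha p p') y (Suc j) \<and> y j \<noteq> y (Suc j))"
    using j unique by blast
  finally show ?thesis .
qed

end
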